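(* Let $T$ be a tree on $n\geq 3$ vertices whose vertex degrees are $\Delta=d_1\geq d_2\geq\cdots\geq d_n$. Then $$\mathcal{E}(T)\leq \sum_{i=2}^n 2\sqrt{d_i-1}+2\sqrt{\Delta}\leq \sum_{i=1}^n 2\sqrt{d_i-1}+1.$$
   Context: For a finite simple graph $G$ with adjacency matrix $A(G)$ having eigenvalues $\lambda_1,\dots,\lambda_n$, the energy of $G$ is $\mathcal{E}(G)=\sum_{i=1}^n|\lambda_i|$. *)

theory Defs
  imports "Jordan_Normal_Form.Char_Poly" "HOL-Computational_Algebra.Fundamental_Theorem_Algebra"
begin

definition simple_graph :: "nat \<Rightarrow> (nat \<Rightarrow> nat \<Rightarrow> bool) \<Rightarrow> bool" where
  "simple_graph n E \<longleftrightarrow>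
     (\<forall>u v. E u v \<longrightarrow> u < n \<and> v < n) \<and> (\<forall>u v. E u v \<longrightarrow> E v u) \<and> (\<forall>u. \<not> E u u)"

definition edge_set :: "nat \<Rightarrow> (nat \<Rightarrow> nat \<Rightarrow> bool) \<Rightarrow> nat set set" where
  "edge_set n E = {{u, v} | u v. u < n \<and> v < n \<and> E u v}"

definition connected_graph :: "nat \<Rightarrow> (nat \<Rightarrow> nat \<Rightarrow> bool) \<Rightarrow> bool" where
  "connected_graph n E \<longleftrightarrow> (\<forall>u<n. \<forall>v<n. E\<^sup>*\<^sup>* u v)"

definition is_tree :: "nat \<Rightarrow> (nat \<Rightarrow> nat \<Rightarrow> bool) \<Rightarrow> bool" where
  "is_tree n E \<longleftrightarrow> simple_graph n E \<and> connected_graph n E \<and> card (edge_set n E) = n - 1"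

definition degree_of :: "nat \<Rightarrow> (nat \<Rightarrow> nat \<Rightarrow> bool) \<Rightarrow> nat \<Rightarrow> nat" where
  "degree_of n E v = card {u. u < n \<and> E v u}"

definition adjacency_matrix :: "nat \<Rightarrow> (nat \<Rightarrow> nat \<Rightarrow> bool) \<Rightarrow> real mat" where
  "adjacency_matrix n E = mat n n (\<lambda>(i, j). if E i j then 1 else 0)"

definition eigenvalues_mset :: "real mat \<Rightarrow> complex multiset" where
  "eigenvalues_mset A = proots (char_poly (map_mat complex_of_real A))"

definition graph_energy :: "nat \<Rightarrow> (nat \<Rightarrow> nat \<Rightarrow> bool) \<Rightarrow> real" where
  "graph_energy n E = (\<Sum>x\<in>#eigenvalues_mset (adjacency_matrix n E). cmod x)"

end

theory Submission
  imports Defs "Jordan_Normal_Form.Schur_Decomposition" "HOL-Analysis.L2_Norm"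
begin

(* Write the adjacency matrix as A = Q D Q^T with Q orthogonal and D = diag(lambda_1, ..., lambda_n).
   For the symmetric orthogonal matrix S = Q sgn(D) Q^T one gets tr(A S) = sum |lambda_i| = E(T),
   and the rows of S are unit vectors.  Root the tree at a vertex r of maximum degree: every edge
   joins a vertex c to one of its children, so tr(A S) = 2 sum_c sum_{v child of c} S_cv, and
   by Cauchy-Schwarz the inner sum is at most sqrt(#children of c).  The root has Delta children,
   every other vertex d_i - 1.  The second inequality is 2 sqrt(Delta) <= 2 sqrt(Delta - 1) + 1,
   which holds because a tree on n >= 3 vertices has Delta >= 2. *)

section \<open>Spectral theorem for real symmetric matrices\<close>

lemma real_symmetric_eigenvalue_real:
  fixes A :: "real mat"
  assumes A: "A \<in> carrier_mat n n" and sym: "transpose_mat A = A"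
    and root: "poly (char_poly (map_mat complex_of_real A)) z = 0"
  shows "z \<in> \<real>"
proof -
  let ?A = "map_mat complex_of_real A"
  have "eigenvalue ?A z" using root A by (simp add: eigenvalue_root_char_poly)
  then obtain v where v: "v \<in> carrier_vec n" "v \<noteq> 0\<^sub>v n" and Av: "?A *\<^sub>v v = z \<cdot>\<^sub>v v"
    using A unfolding eigenvalue_def eigenvector_def by auto
  have row: "(\<Sum>j<n. of_real (A $$ (i,j)) * v $ j) = z * v $ i" if "i < n" for i
  proof -
    have "(?A *\<^sub>v v) $ i = (\<Sum>j<n. of_real (A $$ (i,j)) * v $ j)"
      using that A v by (auto simp: scalar_prod_def lessThan_atLeast0 intro!: sum.cong)
    then show ?thesis using Av that v by simp
  qed
  define s where "s = (\<Sum>i<n. \<Sum>j<n. cnj (v $ i) * of_real (A $$ (i,j)) * v $ j)"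
  define t where "t = (\<Sum>i<n. (cmod (v $ i))\<^sup>2)"
  have "s = (\<Sum>i<n. cnj (v $ i) * (\<Sum>j<n. of_real (A $$ (i,j)) * v $ j))"
    by (simp add: s_def sum_distrib_left mult.assoc)
  also have "\<dots> = (\<Sum>i<n. cnj (v $ i) * (z * v $ i))" by (simp add: row)
  also have "\<dots> = z * of_real t"
    by (simp add: t_def sum_distrib_left mult_ac flip: complex_norm_square)
  finally have s_eq: "s = z * of_real t" .
  have "cnj s = (\<Sum>i<n. \<Sum>j<n. cnj (v $ j) * of_real (A $$ (j,i)) * v $ i)"
    using A sym unfolding s_def
    by (auto simp: mult_ac intro!: sum.cong) (metis carrier_matD index_transpose_mat(1))
  also have "\<dots> = s" unfolding s_def by (rule sum.swap)
  finally have "s \<in> \<real>" by (simp add: Reals_cnj_iff)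
  obtain i where "i < n" "v $ i \<noteq> 0" using v by (metis carrier_vecD eq_vecI index_zero_vec(1,2))
  then have "t > 0" unfolding t_def by (intro sum_pos2[of _ i]) auto
  then have "z = s / of_real t" using s_eq by simp
  then show "z \<in> \<real>" using \<open>s \<in> \<real>\<close> by simp
qed

lemma real_symmetric_unit_eigenvector:
  fixes A :: "real mat"
  assumes A: "A \<in> carrier_mat n n" and sym: "transpose_mat A = A" and n: "0 < n"
  obtains r u where "u \<in> carrier_vec n" "u \<bullet> u = 1" "A *\<^sub>v u = r \<cdot>\<^sub>v u"
proof -
  let ?p = "char_poly (map_mat complex_of_real A)"
  have "degree ?p = n" using A by (simp add: degree_monic_char_poly)
  then obtain z where z: "poly ?p z = 0"
    using n fundamental_theorem_of_algebra constant_degree by (metis neq0_conv)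
  obtain r where "z = of_real r" using real_symmetric_eigenvalue_real[OF A sym z] Reals_cases by blast
  with z have "poly (char_poly A) r = 0" by (simp add: of_real_hom.char_poly_hom[OF A])
  then obtain v where v: "v \<in> carrier_vec n" "v \<noteq> 0\<^sub>v n" and Av: "A *\<^sub>v v = r \<cdot>\<^sub>v v"
    using A unfolding eigenvalue_root_char_poly[OF A, symmetric] eigenvalue_def eigenvector_def by auto
  have "v \<bullet> v > 0" using conjugate_square_greater_0_vec[OF v(1)] v by simp
  define u where "u = (1 / sqrt (v \<bullet> v)) \<cdot>\<^sub>v v"
  show thesis
  proof
    show "u \<in> carrier_vec n" using v by (simp add: u_def)
    show "u \<bullet> u = 1" using v \<open>v \<bullet> v > 0\<close>
      by (simp add: u_def smult_scalar_prod_distrib scalar_prod_smult_distrib)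
    show "A *\<^sub>v u = r \<cdot>\<^sub>v u"
      using A v Av by (simp add: u_def mult_mat_vec smult_smult_assoc mult.commute)
  qed
qed

lemma orthonormal_completion:
  fixes u :: "real vec"
  assumes u: "u \<in> carrier_vec n" and unit: "u \<bullet> u = 1"
  obtains W where "W \<in> carrier_mat n n" "transpose_mat W * W = 1\<^sub>m n" "col W 0 = u"
proof -
  interpret cof_vec_space n "TYPE(real)" .
  have u0: "u \<noteq> 0\<^sub>v n" using unit by auto
  note bc = basis_completion[OF u u0]
  define ws where "ws = gram_schmidt n (basis_completion u)"
  have ws: "corthogonal ws" "set ws \<subseteq> carrier_vec n" "length ws = n"
    using gram_schmidt_result[OF bc(2,4,5) ws_def] bc(6) by auto
  have "hd ws = u"
    using bc(6,7) u0 u unfolding ws_def by (cases "basis_completion u") auto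
  then have ws0: "ws ! 0 = u" using ws(3) u0 u by (cases ws) auto
  have ws_pos: "ws ! i \<bullet> ws ! i > 0" if "i < n" for i
    using corthogonalD[OF ws(1), of i i] ws(3) that conjugate_square_ge_0_vec[of "ws ! i"]
    by (simp add: less_le)
  define W where "W = mat_of_cols n (map (\<lambda>w. (1 / sqrt (w \<bullet> w)) \<cdot>\<^sub>v w) ws)"
  have W: "W \<in> carrier_mat n n"
    unfolding W_def using mat_of_cols_carrier(1)[of n "map (\<lambda>w. (1 / sqrt (w \<bullet> w)) \<cdot>\<^sub>v w) ws"] ws(3)
    by simp
  have col_W: "col W j = (1 / sqrt (ws ! j \<bullet> ws ! j)) \<cdot>\<^sub>v ws ! j" if "j < n" for j
    using ws that unfolding W_def by (subst col_mat_of_cols) auto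
  show thesis
  proof
    show "W \<in> carrier_mat n n" by (fact W)
    show "transpose_mat W * W = 1\<^sub>m n"
    proof (rule eq_matI)
      fix i j assume "i < dim_row (1\<^sub>m n)" "j < dim_col (1\<^sub>m n)"
      then have ij: "i < n" "j < n" by auto
      then have wsij: "ws ! i \<in> carrier_vec n" "ws ! j \<in> carrier_vec n" using ws(2,3) by auto
      from ij have "(transpose_mat W * W) $$ (i, j)
          = (1 / sqrt (ws ! i \<bullet> ws ! i)) * (1 / sqrt (ws ! j \<bullet> ws ! j)) * (ws ! i \<bullet> ws ! j)"
        using W by (simp add: col_W wsij smult_scalar_prod_distrib[of _ n] scalar_prod_smult_distrib[of _ n])
      also have "\<dots> = 1\<^sub>m n $$ (i, j)"
        using ij ws_pos[of i] corthogonalD[OF ws(1), of i j] ws(3) by (cases "i = j") auto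
      finally show "(transpose_mat W * W) $$ (i, j) = 1\<^sub>m n $$ (i, j)" .
    qed (use W in auto)
    show "col W 0 = u" using col_W[of 0] ws0 unit u0 u by (cases n) auto
  qed
qed

lemma orthogonal_mult_transpose:
  assumes "Q \<in> carrier_mat n n" "transpose_mat Q * Q = (1\<^sub>m n :: 'a :: field mat)"
  shows "Q * transpose_mat Q = 1\<^sub>m n"
  using mat_mult_left_right_inverse[of "transpose_mat Q" n Q] assms by simp

lemma symmetric_first_column_block:
  assumes B: "B \<in> carrier_mat (Suc m) (Suc m)" and sym: "transpose_mat B = B"
    and col0: "\<And>i. i < Suc m \<Longrightarrow> B $$ (i, 0) = (if i = 0 then r else 0)"
  shows "B = four_block_mat (mat 1 1 (\<lambda>_. r)) (0\<^sub>m 1 m) (0\<^sub>m m 1)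
      (mat m m (\<lambda>(i, j). B $$ (Suc i, Suc j)))" (is "B = ?M")
proof (rule eq_matI)
  have row0: "B $$ (0, j) = (if j = 0 then r else 0)" if "j < Suc m" for j
    using col0[OF that] sym B that by (metis carrier_matD index_transpose_mat(1) zero_less_Suc)
  fix i j assume "i < dim_row ?M" and "j < dim_col ?M"
  then show "B $$ (i, j) = ?M $$ (i, j)" using col0 row0 by (cases i; cases j) auto
qed (use B in auto)

lemma real_symmetric_deflation:
  fixes A :: "real mat"
  assumes A: "A \<in> carrier_mat (Suc m) (Suc m)" and sym: "transpose_mat A = A"
  obtains W r C where "W \<in> carrier_mat (Suc m) (Suc m)" "transpose_mat W * W = 1\<^sub>m (Suc m)"
    "C \<in> carrier_mat m m" "transpose_mat C = C"
    "transpose_mat W * A * W = four_block_mat (mat 1 1 (\<lambda>_. r)) (0\<^sub>m 1 m) (0\<^sub>m m 1) C"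
proof -
  let ?n = "Suc m"
  obtain r u where u: "u \<in> carrier_vec ?n" "u \<bullet> u = 1" and Au: "A *\<^sub>v u = r \<cdot>\<^sub>v u"
    using real_symmetric_unit_eigenvector[OF A sym] by blast
  obtain W where W: "W \<in> carrier_mat ?n ?n" and WtW: "transpose_mat W * W = 1\<^sub>m ?n"
    and W0: "col W 0 = u"
    using orthonormal_completion[OF u] by blast
  define B where "B = transpose_mat W * A * W"
  have B: "B \<in> carrier_mat ?n ?n" using A W by (simp add: B_def)
  have B_sym: "transpose_mat B = B"
    using A W sym by (simp add: B_def transpose_mult[of _ ?n ?n _ ?n] assoc_mult_mat[of _ ?n ?n _ ?n _ ?n])
  have "B $$ (i, 0) = (if i = 0 then r else 0)" if i: "i < ?n" for i
  proof -
    have "B $$ (i, 0) = col W i \<bullet> (A *\<^sub>v col W 0)"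
      using A W i by (simp add: B_def assoc_mult_mat[of _ ?n ?n _ ?n _ ?n] mult_mat_vec_def)
    also have "\<dots> = r * (transpose_mat W * W) $$ (i, 0)"
      using W i u by (simp add: W0 Au scalar_prod_smult_distrib[of _ ?n])
    finally show ?thesis using WtW i by simp
  qed
  then have B_block: "B = four_block_mat (mat 1 1 (\<lambda>_. r)) (0\<^sub>m 1 m) (0\<^sub>m m 1)
      (mat m m (\<lambda>(i, j). B $$ (Suc i, Suc j)))" (is "B = four_block_mat _ _ _ ?C")
    by (rule symmetric_first_column_block[OF B B_sym])
  have "transpose_mat ?C = ?C"
    using B_sym B by (auto intro!: eq_matI) (metis carrier_matD index_transpose_mat(1) Suc_less_eq)
  with W WtW B_block show thesis by (intro that) (auto simp: B_def)
qed

lemma four_block_diag_mult: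
  assumes "A \<in> carrier_mat k k" "B \<in> carrier_mat k k" "C \<in> carrier_mat m m" "D \<in> carrier_mat m m"
  shows "four_block_mat A (0\<^sub>m k m) (0\<^sub>m m k) C * four_block_mat B (0\<^sub>m k m) (0\<^sub>m m k) D
       = four_block_mat (A * B) (0\<^sub>m k m) (0\<^sub>m m k) (C * D)"
  using assms by (simp add: mult_four_block_mat[OF assms(1) _ _ assms(3) assms(2) _ _ assms(4)])

lemma orthogonal_block_extension:
  fixes Q :: "'a :: comm_ring_1 mat"
  assumes Q: "Q \<in> carrier_mat m m" and orth: "transpose_mat Q * Q = 1\<^sub>m m"
  defines "P \<equiv> four_block_mat (1\<^sub>m 1) (0\<^sub>m 1 m) (0\<^sub>m m 1) Q"
  shows "P \<in> carrier_mat (Suc m) (Suc m)" and "transpose_mat P * P = 1\<^sub>m (Suc m)"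
    and "P * mat_diag (Suc m) (case_nat r d) * transpose_mat P
      = four_block_mat (mat 1 1 (\<lambda>_. r)) (0\<^sub>m 1 m) (0\<^sub>m m 1) (Q * mat_diag m d * transpose_mat Q)"
proof -
  show "P \<in> carrier_mat (Suc m) (Suc m)"
    using four_block_carrier_mat[OF one_carrier_mat[of 1] Q] by (simp add: P_def)
  have Pt: "transpose_mat P = four_block_mat (1\<^sub>m 1) (0\<^sub>m 1 m) (0\<^sub>m m 1) (transpose_mat Q)"
    unfolding P_def using transpose_four_block_mat[OF one_carrier_mat zero_carrier_mat zero_carrier_mat Q]
    by simp
  have D: "mat_diag (Suc m) (case_nat r d)
      = four_block_mat (mat 1 1 (\<lambda>_. r)) (0\<^sub>m 1 m) (0\<^sub>m m 1) (mat_diag m d)"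
    by (rule eq_matI) (auto simp: mat_diag_def split: nat.split)
  show "transpose_mat P * P = 1\<^sub>m (Suc m)"
    unfolding Pt unfolding P_def using Q orth by (simp add: four_block_diag_mult)
  show "P * mat_diag (Suc m) (case_nat r d) * transpose_mat P
      = four_block_mat (mat 1 1 (\<lambda>_. r)) (0\<^sub>m 1 m) (0\<^sub>m m 1) (Q * mat_diag m d * transpose_mat Q)"
    unfolding D Pt unfolding P_def using Q by (simp add: four_block_diag_mult)
qed

theorem real_symmetric_orthogonal_diagonalization:
  fixes A :: "real mat"
  assumes "A \<in> carrier_mat n n" "transpose_mat A = A"
  obtains Q d where "Q \<in> carrier_mat n n" "transpose_mat Q * Q = 1\<^sub>m n"
    "A = Q * mat_diag n d * transpose_mat Q"
proof -
  have "\<exists>Q d. Q \<in> carrier_mat n n \<and> transpose_mat Q * Q = 1\<^sub>m n \<and> A = Q * mat_diag n d * transpose_mat Q"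
    using assms
  proof (induction n arbitrary: A)
    case 0
    then show ?case by (intro exI[of _ "1\<^sub>m 0"]) (auto intro!: eq_matI)
  next
    case (Suc m)
    let ?n = "Suc m"
    obtain W r C where W: "W \<in> carrier_mat ?n ?n" and WtW: "transpose_mat W * W = 1\<^sub>m ?n"
      and C: "C \<in> carrier_mat m m" "transpose_mat C = C"
      and WAW: "transpose_mat W * A * W = four_block_mat (mat 1 1 (\<lambda>_. r)) (0\<^sub>m 1 m) (0\<^sub>m m 1) C"
      using real_symmetric_deflation Suc.prems by blast
    obtain Q' d' where Q': "Q' \<in> carrier_mat m m" "transpose_mat Q' * Q' = 1\<^sub>m m"
      and C_eq: "C = Q' * mat_diag m d' * transpose_mat Q'"
      using Suc.IH[OF C] by blast
    define P where "P = four_block_mat (1\<^sub>m 1) (0\<^sub>m 1 m) (0\<^sub>m m 1) Q'"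
    note P = orthogonal_block_extension[OF Q', folded P_def]
    define D where "D = mat_diag ?n (case_nat r d')"
    have D: "D \<in> carrier_mat ?n ?n" by (simp add: D_def)
    have A: "A \<in> carrier_mat ?n ?n" using Suc.prems by simp
    show ?case
    proof (intro exI conjI)
      show "W * P \<in> carrier_mat ?n ?n" using W P(1) by simp
      have "transpose_mat (W * P) * (W * P) = transpose_mat P * (transpose_mat W * W) * P"
        using W P(1) by (simp add: transpose_mult[of _ ?n ?n _ ?n] assoc_mult_mat[of _ ?n ?n _ ?n _ ?n])
      then show "transpose_mat (W * P) * (W * P) = 1\<^sub>m ?n" using WtW P by simp
      have "A = (W * transpose_mat W) * A * (W * transpose_mat W)"
        using A by (simp add: orthogonal_mult_transpose[OF W WtW])
      also have "\<dots> = W * (transpose_mat W * A * W) * transpose_mat W"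
        using W A by (simp add: assoc_mult_mat[of _ ?n ?n _ ?n _ ?n])
      also have "transpose_mat W * A * W = P * D * transpose_mat P"
        unfolding WAW C_eq D_def P(3) ..
      also have "W * (P * D * transpose_mat P) * transpose_mat W = W * P * D * transpose_mat (W * P)"
        using W P(1) D by (simp add: transpose_mult[of _ ?n ?n _ ?n] assoc_mult_mat[of _ ?n ?n _ ?n _ ?n])
      finally show "A = W * P * mat_diag ?n (case_nat r d') * transpose_mat (W * P)"
        by (simp add: D_def)
    qed
  qed
  then show thesis using that by blast
qed

section \<open>Energy as a trace\<close>

definition mat_trace :: "'a :: comm_ring_1 mat \<Rightarrow> 'a" where
  "mat_trace A = (\<Sum>i<dim_row A. A $$ (i, i))"

lemma mat_trace_mult:
  assumes "A \<in> carrier_mat n k" "B \<in> carrier_mat k n"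
  shows "mat_trace (A * B) = (\<Sum>i<n. \<Sum>j<k. A $$ (i, j) * B $$ (j, i))"
  using assms by (auto simp: mat_trace_def scalar_prod_def lessThan_atLeast0 intro!: sum.cong)

lemma mat_trace_mult_comm:
  assumes "A \<in> carrier_mat n k" "B \<in> carrier_mat k n"
  shows "mat_trace (A * B) = mat_trace (B * A)"
  unfolding mat_trace_mult[OF assms] mat_trace_mult[OF assms(2,1)]
  by (subst sum.swap) (simp add: mult.commute)

lemma mat_trace_mat_diag: "mat_trace (mat_diag n f) = (\<Sum>i<n. f i)"
  by (simp add: mat_trace_def mat_diag_def)

lemma proots_prod_linear_factors:
  "proots (\<Prod>a\<leftarrow>xs. [:- a, 1:]) = mset (xs :: 'a :: idom list)"
proof (induction xs)
  case (Cons a xs)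
  have "(\<Prod>a\<leftarrow>xs. [:- a, 1:]) \<noteq> 0" by (auto simp: prod_list_zero_iff)
  with Cons show ?case by (simp add: proots_mult del: mult_pCons_left)
qed simp

lemma proots_char_poly_mat_diag:
  "proots (char_poly (mat_diag n (f :: nat \<Rightarrow> 'a :: idom))) = mset (map f [0..<n])"
proof -
  have "diag_mat (mat_diag n f) = map f [0..<n]"
    by (simp add: diag_mat_def mat_diag_def)
  moreover have "upper_triangular (mat_diag n f)"
    by (simp add: upper_triangular_def mat_diag_def)
  ultimately have "char_poly (mat_diag n f) = (\<Prod>a\<leftarrow>map f [0..<n]. [:- a, 1:])"
    using char_poly_upper_triangular[of "mat_diag n f" n] by simp
  then show ?thesis by (simp only: proots_prod_linear_factors)
qed

lemma proots_char_poly_orthogonal_diagonalization: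
  fixes Q :: "real mat"
  assumes Q: "Q \<in> carrier_mat n n" and orth: "transpose_mat Q * Q = 1\<^sub>m n"
  shows "proots (char_poly (map_mat complex_of_real (Q * mat_diag n d * transpose_mat Q)))
       = mset (map (\<lambda>i. complex_of_real (d i)) [0..<n])"
proof -
  have QDQt: "Q * mat_diag n d * transpose_mat Q \<in> carrier_mat n n"
    using Q by (metis mult_carrier_mat mat_diag_dim transpose_carrier_mat)
  have "similar_mat (Q * mat_diag n d * transpose_mat Q) (mat_diag n d)"
    using Q orth orthogonal_mult_transpose[OF Q orth] unfolding similar_mat_def similar_mat_wit_def
    by (intro exI[of _ Q] exI[of _ "transpose_mat Q"]) auto
  then have "char_poly (Q * mat_diag n d * transpose_mat Q) = char_poly (mat_diag n d)"
    by (rule char_poly_similar)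
  then have "char_poly (map_mat complex_of_real (Q * mat_diag n d * transpose_mat Q))
      = char_poly (map_mat complex_of_real (mat_diag n d))"
    by (simp add: of_real_hom.char_poly_hom[OF QDQt] of_real_hom.char_poly_hom[OF mat_diag_dim])
  also have "map_mat complex_of_real (mat_diag n d) = mat_diag n (\<lambda>i. complex_of_real (d i))"
    by (rule eq_matI) (auto simp: mat_diag_def)
  finally show ?thesis by (simp add: proots_char_poly_mat_diag)
qed

lemma orthogonal_conj_mult:
  fixes Q X Y :: "'a :: comm_ring_1 mat"
  assumes Q: "Q \<in> carrier_mat n n" and orth: "transpose_mat Q * Q = 1\<^sub>m n"
    and X: "X \<in> carrier_mat n n" and Y: "Y \<in> carrier_mat n n"
  shows "(Q * X * transpose_mat Q) * (Q * Y * transpose_mat Q) = Q * (X * Y) * transpose_mat Q"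
proof -
  have Qt: "transpose_mat Q \<in> carrier_mat n n" using Q by simp
  have "(Q * X * transpose_mat Q) * (Q * Y * transpose_mat Q) = Q * X * (transpose_mat Q * Q) * Y * transpose_mat Q"
    using Q Qt X Y by (simp add: assoc_mult_mat[of _ n n _ n _ n])
  also have "\<dots> = Q * (X * Y) * transpose_mat Q"
    unfolding orth right_mult_one_mat[OF mult_carrier_mat[OF Q X]]
    using Q X Y by (simp add: assoc_mult_mat[of _ n n _ n _ n])
  finally show ?thesis .
qed

lemma real_symmetric_sum_abs_eigenvalues_eq_trace:
  fixes A :: "real mat"
  assumes A: "A \<in> carrier_mat n n" and sym: "transpose_mat A = A"
  obtains S where "S \<in> carrier_mat n n" "transpose_mat S = S" "S * S = 1\<^sub>m n"
    "(\<Sum>x\<in>#proots (char_poly (map_mat complex_of_real A)). cmod x) = mat_trace (A * S)"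
proof -
  obtain Q d where Q: "Q \<in> carrier_mat n n" and orth: "transpose_mat Q * Q = 1\<^sub>m n"
    and A_eq: "A = Q * mat_diag n d * transpose_mat Q"
    using real_symmetric_orthogonal_diagonalization[OF A sym] by blast
  \<comment> \<open>not sgn: a zero eigenvalue must get sign 1, otherwise S * S = 1 fails\<close>
  define g where "g i = (if d i < 0 then - 1 else 1 :: real)" for i
  define D where "D = mat_diag n d"
  define G where "G = mat_diag n g"
  have D: "D \<in> carrier_mat n n" and G: "G \<in> carrier_mat n n" by (simp_all add: D_def G_def)
  define S where "S = Q * G * transpose_mat Q"
  show thesis
  proof
    show S: "S \<in> carrier_mat n n" using Q G by (simp add: S_def)
    have "transpose_mat G = G" by (rule eq_matI) (auto simp: G_def mat_diag_def)
    then show "transpose_mat S = S"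
      using Q G by (simp add: S_def transpose_mult[of _ n n _ n])
    have "(\<lambda>i. g i * g i) = (\<lambda>_. 1)" by (auto simp: g_def)
    then have GG: "G * G = 1\<^sub>m n" by (simp add: G_def)
    show "S * S = 1\<^sub>m n"
      unfolding S_def orthogonal_conj_mult[OF Q orth G G] GG
      using Q by (simp add: orthogonal_mult_transpose[OF Q orth])
    have "A * S = Q * (D * G) * transpose_mat Q"
      unfolding A_eq S_def D_def[symmetric] by (rule orthogonal_conj_mult[OF Q orth D G])
    then have "mat_trace (A * S) = mat_trace (Q * (D * G * transpose_mat Q))"
      using Q D G by (simp add: assoc_mult_mat[of _ n n _ n _ n])
    also have "\<dots> = mat_trace (D * G * transpose_mat Q * Q)"
      using Q D G by (subst mat_trace_mult_comm[of _ n n]) auto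
    also have "D * G * transpose_mat Q * Q = D * G * (transpose_mat Q * Q)"
      using Q D G by (simp add: assoc_mult_mat[of _ n n _ n _ n])
    also have "mat_trace (D * G * (transpose_mat Q * Q)) = (\<Sum>i<n. d i * g i)"
      unfolding orth by (simp add: D_def G_def right_mult_one_mat[OF mat_diag_dim] mat_trace_mat_diag)
    also have "\<dots> = (\<Sum>i<n. \<bar>d i\<bar>)" by (rule sum.cong) (auto simp: g_def)
    also have "\<dots> = (\<Sum>x\<in>#proots (char_poly (map_mat complex_of_real A)). cmod x)"
      using Q orth by (simp add: A_eq proots_char_poly_orthogonal_diagonalization image_mset.compositionality
          lessThan_atLeast0 flip: sum_unfold_sum_mset)
    finally show "(\<Sum>x\<in>#proots (char_poly (map_mat complex_of_real A)). cmod x) = mat_trace (A * S)" ..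
  qed
qed

section \<open>Graphs with a parent map\<close>

lemma sum_le_sqrt_card:
  fixes x :: "'a \<Rightarrow> real"
  assumes "(\<Sum>i\<in>C. (x i)\<^sup>2) \<le> 1"
  shows "(\<Sum>i\<in>C. x i) \<le> sqrt (card C)"
proof -
  have "(\<Sum>i\<in>C. x i) \<le> (\<Sum>i\<in>C. \<bar>x i\<bar> * \<bar>1\<bar>)" by (intro sum_mono) auto
  also have "\<dots> \<le> L2_set x C * L2_set (\<lambda>_. 1) C" by (rule L2_set_mult_ineq)
  also have "\<dots> \<le> sqrt (card C)"
    using assms by (auto simp: L2_set_def L2_set_constant intro!: mult_left_le_one_le sum_nonneg)
  finally show ?thesis .
qed

lemma adjacency_matrix_carrier: "adjacency_matrix n E \<in> carrier_mat n n"
  by (simp add: adjacency_matrix_def)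

lemma adjacency_matrix_index:
  "i < n \<Longrightarrow> j < n \<Longrightarrow> adjacency_matrix n E $$ (i, j) = (if E i j then 1 else 0)"
  by (simp add: adjacency_matrix_def)

lemma graph_energy_eq_neighbour_sum:
  assumes "simple_graph n E"
  obtains S :: "nat \<Rightarrow> nat \<Rightarrow> real"
  where "\<And>i j. i < n \<Longrightarrow> j < n \<Longrightarrow> S i j = S j i"
    and "\<And>i. i < n \<Longrightarrow> (\<Sum>j<n. (S i j)\<^sup>2) = 1"
    and "graph_energy n E = (\<Sum>i<n. \<Sum>j | j < n \<and> E i j. S i j)"
proof -
  let ?A = "adjacency_matrix n E"
  have A_sym: "transpose_mat ?A = ?A"
    using assms by (intro eq_matI) (auto simp: adjacency_matrix_def simple_graph_def)
  obtain M where M: "M \<in> carrier_mat n n" "transpose_mat M = M" "M * M = 1\<^sub>m n"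
    and energy: "graph_energy n E = mat_trace (?A * M)"
    using real_symmetric_sum_abs_eigenvalues_eq_trace[OF adjacency_matrix_carrier A_sym]
    unfolding graph_energy_def eigenvalues_mset_def by metis
  have M_sym: "M $$ (i, j) = M $$ (j, i)" if "i < n" "j < n" for i j
    using M(1,2) that by (metis carrier_matD index_transpose_mat(1))
  show thesis
  proof
    show "M $$ (i, j) = M $$ (j, i)" if "i < n" "j < n" for i j using M_sym that .
    show "(\<Sum>j<n. (M $$ (i, j))\<^sup>2) = 1" if i: "i < n" for i
    proof -
      have "(M * M) $$ (i, i) = (\<Sum>j<n. (M $$ (i, j))\<^sup>2)"
        using M(1) i M_sym by (auto simp: scalar_prod_def lessThan_atLeast0 power2_eq_square intro!: sum.cong)
      then show ?thesis using M(3) i by simp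
    qed
    have "mat_trace (?A * M) = (\<Sum>i<n. \<Sum>j<n. if E i j then M $$ (j, i) else 0)"
      using M(1) by (auto simp: mat_trace_mult[OF adjacency_matrix_carrier] adjacency_matrix_index intro!: sum.cong)
    also have "\<dots> = (\<Sum>i<n. \<Sum>j | j < n \<and> E i j. M $$ (j, i))"
      by (intro sum.cong refl sum.mono_neutral_cong_right) auto
    also have "\<dots> = (\<Sum>i<n. \<Sum>j | j < n \<and> E i j. M $$ (i, j))"
      using M_sym by (intro sum.cong) auto
    finally show "graph_energy n E = (\<Sum>i<n. \<Sum>j | j < n \<and> E i j. M $$ (i, j))"
      using energy by simp
  qed
qed

locale parent_map =
  fixes n :: nat and E :: "nat \<Rightarrow> nat \<Rightarrow> bool" and r :: nat and p :: "nat \<Rightarrow> nat"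
  assumes simple: "simple_graph n E"
    and root: "r < n"
    and parent_edge: "\<And>v. v < n \<Longrightarrow> v \<noteq> r \<Longrightarrow> E (p v) v"
    and edge_parent: "\<And>u v. E u v \<Longrightarrow> u \<noteq> r \<and> p u = v \<or> v \<noteq> r \<and> p v = u"
    and parent_parent_neq: "\<And>v. v < n \<Longrightarrow> v \<noteq> r \<Longrightarrow> p v \<noteq> r \<Longrightarrow> p (p v) \<noteq> v"
begin

definition children :: "nat \<Rightarrow> nat set" where
  "children c = {v. v < n \<and> v \<noteq> r \<and> p v = c}"

lemma finite_children [simp]: "finite (children c)"
  unfolding children_def by simp

lemma parent_less: "v < n \<Longrightarrow> v \<noteq> r \<Longrightarrow> p v < n"
  using parent_edge simple unfolding simple_graph_def by blast

lemma neighbours_eq: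
  assumes "c < n"
  shows "{u. u < n \<and> E c u} = children c \<union> (if c = r then {} else {p c})"
  using assms edge_parent parent_edge parent_less simple
  unfolding children_def simple_graph_def by auto

lemma sum_neighbours:
  assumes c: "c < n"
  shows "(\<Sum>u | u < n \<and> E c u. f u) = (\<Sum>v\<in>children c. f v) + (if c = r then 0 else f (p c))"
proof (cases "c = r")
  case False
  then have "p c \<notin> children c" using parent_parent_neq[OF c] unfolding children_def by auto
  with False show ?thesis by (simp add: neighbours_eq[OF c] add.commute)
qed (use neighbours_eq[OF c] in simp)

lemma degree_eq: "c < n \<Longrightarrow> degree_of n E c = card (children c) + (if c = r then 0 else 1)"
  using sum_neighbours[of c "\<lambda>_. 1 :: nat"] by (simp add: degree_of_def flip: card_eq_sum)

lemma sum_children: "(\<Sum>c<n. \<Sum>v\<in>children c. g v) = (\<Sum>v\<in>{..<n} - {r}. g v)"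
proof -
  have "(\<Sum>c<n. \<Sum>v\<in>children c. g v) = (\<Sum>c<n. \<Sum>v\<in>{v \<in> {..<n} - {r}. p v = c}. g v)"
    unfolding children_def by (intro sum.cong) auto
  also have "\<dots> = (\<Sum>v\<in>{..<n} - {r}. g v)"
    using parent_less by (intro sum.group) auto
  finally show ?thesis .
qed

lemma sum_degree: "(\<Sum>c<n. degree_of n E c) = 2 * (n - 1)"
proof -
  have "(\<Sum>c<n. degree_of n E c) = (\<Sum>c<n. card (children c)) + (\<Sum>c<n. if c = r then 0 else 1)"
    by (simp add: degree_eq sum.distrib)
  also have "(\<Sum>c<n. card (children c)) = n - 1"
    using sum_children[of "\<lambda>_. 1 :: nat"] root by (simp flip: card_eq_sum)
  also have "(\<Sum>c<n. if c = r then 0 else 1) = n - 1"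
    using root by (simp add: sum.If_cases flip: Diff_eq)
  finally show ?thesis by simp
qed

lemma sum_neighbours_eq_twice_sum_children:
  fixes S :: "nat \<Rightarrow> nat \<Rightarrow> real"
  assumes sym: "\<And>i j. i < n \<Longrightarrow> j < n \<Longrightarrow> S i j = S j i"
  shows "(\<Sum>c<n. \<Sum>u | u < n \<and> E c u. S c u) = 2 * (\<Sum>c<n. \<Sum>v\<in>children c. S c v)"
proof -
  have "(\<Sum>c<n. \<Sum>u | u < n \<and> E c u. S c u)
      = (\<Sum>c<n. \<Sum>v\<in>children c. S c v) + (\<Sum>c<n. if c = r then 0 else S c (p c))"
    by (simp add: sum_neighbours sum.distrib)
  also have "(\<Sum>c<n. if c = r then 0 else S c (p c)) = (\<Sum>v\<in>{..<n} - {r}. S (p v) v)"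
    using sym parent_less by (auto simp: sum.If_cases Diff_eq intro!: sum.cong)
  also have "\<dots> = (\<Sum>c<n. \<Sum>v\<in>children c. S c v)"
    unfolding sum_children[symmetric] by (intro sum.cong refl) (simp add: children_def)
  finally show ?thesis by simp
qed

lemma graph_energy_le:
  "graph_energy n E
    \<le> 2 * sqrt (degree_of n E r) + (\<Sum>c\<in>{..<n} - {r}. 2 * sqrt (real (degree_of n E c) - 1))"
proof -
  obtain S :: "nat \<Rightarrow> nat \<Rightarrow> real"
    where S_sym: "\<And>i j. i < n \<Longrightarrow> j < n \<Longrightarrow> S i j = S j i"
      and S_row: "\<And>i. i < n \<Longrightarrow> (\<Sum>j<n. (S i j)\<^sup>2) = 1"
      and energy: "graph_energy n E = (\<Sum>i<n. \<Sum>j | j < n \<and> E i j. S i j)"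
    using graph_energy_eq_neighbour_sum[OF simple] by blast
  have "(\<Sum>v\<in>children c. S c v) \<le> sqrt (card (children c))" if c: "c < n" for c
  proof (rule sum_le_sqrt_card)
    have "(\<Sum>v\<in>children c. (S c v)\<^sup>2) \<le> (\<Sum>j<n. (S c j)\<^sup>2)"
      by (rule sum_mono2) (auto simp: children_def)
    then show "(\<Sum>v\<in>children c. (S c v)\<^sup>2) \<le> 1" using S_row[OF c] by simp
  qed
  moreover have "graph_energy n E = 2 * (\<Sum>c<n. \<Sum>v\<in>children c. S c v)"
    using energy sum_neighbours_eq_twice_sum_children[OF S_sym] by simp
  ultimately have "graph_energy n E \<le> 2 * (\<Sum>c<n. sqrt (card (children c)))"
    by (auto intro: sum_mono)
  also have "\<dots> = 2 * sqrt (card (children r)) + (\<Sum>c\<in>{..<n} - {r}. 2 * sqrt (card (children c)))"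
    using root by (simp add: sum.remove[of "{..<n}" r] sum_distrib_left)
  also have "\<dots> = 2 * sqrt (degree_of n E r) + (\<Sum>c\<in>{..<n} - {r}. 2 * sqrt (real (degree_of n E c) - 1))"
    using root by (simp add: degree_eq)
  finally show ?thesis .
qed

end

section \<open>Trees\<close>

lemma connected_graph_parent_depth:
  assumes conn: "connected_graph n E" and r: "r < n"
  obtains p and dep :: "nat \<Rightarrow> nat"
  where "\<And>v. v < n \<Longrightarrow> v \<noteq> r \<Longrightarrow> E (p v) v \<and> dep (p v) < dep v"
proof -
  define dep where "dep v = (LEAST k. (E ^^ k) r v)" for v
  have "\<exists>u. E u v \<and> dep u < dep v" if v: "v < n" "v \<noteq> r" for v
  proof -
    obtain k where "(E ^^ k) r v" using conn r v unfolding connected_graph_def rtranclp_power by blast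
    then have reach: "(E ^^ dep v) r v" unfolding dep_def by (rule LeastI)
    then obtain k' where k': "dep v = Suc k'" using v by (cases "dep v") auto
    with reach obtain u where "(E ^^ k') r u" "E u v" by (auto elim: relpowp_Suc_E)
    moreover from this have "dep u \<le> k'" unfolding dep_def by (intro Least_le)
    ultimately show ?thesis using k' by auto
  qed
  then show thesis
    using that[of "\<lambda>v. SOME u. E u v \<and> dep u < dep v" dep] by (metis (no_types, lifting) someI_ex)
qed

lemma tree_parent_map:
  assumes tree: "is_tree n E" and r: "r < n"
  obtains p where "parent_map n E r p"
proof -
  have simple: "simple_graph n E" and conn: "connected_graph n E"
    and card_edges: "card (edge_set n E) = n - 1"
    using tree unfolding is_tree_def by auto
  obtain p and dep :: "nat \<Rightarrow> nat"
    where pd: "\<And>v. v < n \<Longrightarrow> v \<noteq> r \<Longrightarrow> E (p v) v \<and> dep (p v) < dep v"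
    using connected_graph_parent_depth[OF conn r] by blast
  let ?V = "{..<n} - {r}"
  have "inj_on (\<lambda>v. {p v, v}) ?V"
  proof (rule inj_onI)
    fix v w assume "v \<in> ?V" "w \<in> ?V" "{p v, v} = {p w, w}"
    then show "v = w" using pd[of v] pd[of w] by (auto simp: doubleton_eq_iff)
  qed
  moreover have "(\<lambda>v. {p v, v}) ` ?V \<subseteq> edge_set n E"
    using pd simple unfolding edge_set_def simple_graph_def by blast
  moreover have "finite (edge_set n E)"
    by (rule finite_subset[of _ "Pow {..<n}"]) (auto simp: edge_set_def)
  ultimately have edges: "(\<lambda>v. {p v, v}) ` ?V = edge_set n E"
    using r card_edges by (intro card_subset_eq) (auto simp: card_image)
  show thesis
  proof (rule that, unfold_locales)
    show "simple_graph n E" by (fact simple)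
    show "r < n" by (fact r)
    show "E (p v) v" if "v < n" "v \<noteq> r" for v using pd[OF that] by blast
  next
    fix u v assume "E u v"
    then have "{u, v} \<in> edge_set n E" using simple unfolding edge_set_def simple_graph_def by blast
    then obtain w where "w \<in> ?V" "{u, v} = {p w, w}" using edges by blast
    then show "u \<noteq> r \<and> p u = v \<or> v \<noteq> r \<and> p v = u" by (auto simp: doubleton_eq_iff)
  next
    fix v assume v: "v < n" "v \<noteq> r" and pv: "p v \<noteq> r"
    have "E (p v) v" and dep_pv: "dep (p v) < dep v" using pd[OF v] by auto
    then have "p v < n" using simple unfolding simple_graph_def by blast
    then have "dep (p (p v)) < dep (p v)" using pd[of "p v"] pv by blast
    then show "p (p v) \<noteq> v" using dep_pv by auto
  qed
qed

lemma tree_energy_le: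
  assumes "is_tree n E" "r < n"
  shows "graph_energy n E
    \<le> 2 * sqrt (degree_of n E r) + (\<Sum>c\<in>{..<n} - {r}. 2 * sqrt (real (degree_of n E c) - 1))"
proof -
  obtain p where "parent_map n E r p" using tree_parent_map[OF assms] .
  then show ?thesis by (rule parent_map.graph_energy_le)
qed

lemma tree_sum_degree:
  assumes "is_tree n E"
  shows "(\<Sum>c<n. degree_of n E c) = 2 * (n - 1)"
proof (cases "n = 0")
  case False
  then obtain p where "parent_map n E 0 p" using tree_parent_map[OF assms, of 0] by blast
  then show ?thesis by (rule parent_map.sum_degree)
qed simp

lemma tree_exists_degree_ge_2:
  assumes "is_tree n E" "3 \<le> n"
  obtains c where "c < n" "2 \<le> degree_of n E c"
proof -
  have "\<not> (\<forall>c<n. degree_of n E c \<le> 1)"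
  proof
    assume "\<forall>c<n. degree_of n E c \<le> 1"
    then have "(\<Sum>c<n. degree_of n E c) \<le> (\<Sum>c<n. 1)" by (intro sum_mono) auto
    with tree_sum_degree[OF assms(1)] assms(2) show False by simp
  qed
  then show thesis using that by (auto simp: not_le)
qed

lemma sqrt_le_sqrt_diff_one_add_half:
  fixes x :: real
  assumes "25 / 16 \<le> x"
  shows "sqrt x \<le> sqrt (x - 1) + 1 / 2"
proof (rule real_le_lsqrt)
  have "(3 / 4)\<^sup>2 \<le> x - 1" using assms by (simp add: power2_eq_square)
  then have "3 / 4 \<le> sqrt (x - 1)" by (rule real_le_rsqrt)
  moreover have "(sqrt (x - 1))\<^sup>2 = x - 1" using assms by simp
  ultimately show "x \<le> (sqrt (x - 1) + 1 / 2)\<^sup>2" by (simp add: power2_sum) (simp add: power2_eq_square)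
  show "0 \<le> sqrt (x - 1) + 1 / 2" using \<open>3 / 4 \<le> sqrt (x - 1)\<close> by simp
qed

lemma sum_bij_betw_Diff_first:
  fixes n :: nat
  assumes bij: "bij_betw \<sigma> {1..n} A" and n: "1 \<le> n"
  shows "(\<Sum>c\<in>A - {\<sigma> 1}. g c) = (\<Sum>i=2..n. g (\<sigma> i))"
proof -
  have "bij_betw \<sigma> ({1..n} - {1}) (A - {\<sigma> 1})"
    by (rule bij_betw_DiffI[OF bij bij_betw_singletonI[OF refl]]) (use bij_betw_apply[OF bij] n in auto)
  moreover have "{1..n} - {1} = {2..n}" by auto
  ultimately have "bij_betw \<sigma> {2..n} (A - {\<sigma> 1})" by metis
  then show ?thesis by (rule sum.reindex_bij_betw[symmetric])
qed

theorem theorem3p1: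
  fixes n :: nat and E :: "nat \<Rightarrow> nat \<Rightarrow> bool" and \<sigma> :: "nat \<Rightarrow> nat" and d :: "nat \<Rightarrow> nat"
    and \<Delta> :: nat
  assumes "n \<ge> 3"
    and "is_tree n E"
    and "bij_betw \<sigma> {1..n} {0..<n}"
    and "\<And>i. i \<in> {1..n} \<Longrightarrow> d i = degree_of n E (\<sigma> i)"
    and "\<And>i j. 1 \<le> i \<Longrightarrow> i \<le> j \<Longrightarrow> j \<le> n \<Longrightarrow> d j \<le> d i"
    and "\<Delta> = d 1"
  shows "graph_energy n E \<le> (\<Sum>i=2..n. 2 * sqrt (real (d i) - 1)) + 2 * sqrt (real \<Delta>)
         \<and> (\<Sum>i=2..n. 2 * sqrt (real (d i) - 1)) + 2 * sqrt (real \<Delta>)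
           \<le> (\<Sum>i=1..n. 2 * sqrt (real (d i) - 1)) + 1"
proof -
  have bij: "bij_betw \<sigma> {1..n} {..<n}" using assms(3) by (simp only: atLeast0LessThan)
  have deg: "degree_of n E (\<sigma> i) = d i" if "i \<in> {1..n}" for i using assms(4) that by simp
  have root: "\<sigma> 1 < n" using bij_betw_apply[OF bij, of 1] assms(1) by simp
  have "(\<Sum>c\<in>{..<n} - {\<sigma> 1}. 2 * sqrt (real (degree_of n E c) - 1))
      = (\<Sum>i=2..n. 2 * sqrt (real (degree_of n E (\<sigma> i)) - 1))"
    by (rule sum_bij_betw_Diff_first[OF bij]) (use assms(1) in simp)
  also have "\<dots> = (\<Sum>i=2..n. 2 * sqrt (real (d i) - 1))" using deg by (intro sum.cong) auto
  finally have first: "graph_energy n E \<le> (\<Sum>i=2..n. 2 * sqrt (real (d i) - 1)) + 2 * sqrt (real \<Delta>)"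
    using tree_energy_le[OF assms(2) root] deg[of 1] assms(1,6) by simp
  obtain c where c: "c < n" "2 \<le> degree_of n E c" using tree_exists_degree_ge_2[OF assms(2,1)] .
  then obtain i where i: "i \<in> {1..n}" "c = \<sigma> i" using bij_betw_imp_surj_on[OF bij] by blast
  then have "2 \<le> \<Delta>" using c(2) deg[OF i(1)] assms(5)[of 1 i] assms(6) by auto
  then have "2 * sqrt (real \<Delta>) \<le> 2 * sqrt (real (d 1) - 1) + 1"
    using sqrt_le_sqrt_diff_one_add_half[of \<Delta>] assms(6) by simp
  moreover have "(\<Sum>i=1..n. 2 * sqrt (real (d i) - 1))
      = 2 * sqrt (real (d 1) - 1) + (\<Sum>i=2..n. 2 * sqrt (real (d i) - 1))"
    unfolding Suc_1[symmetric] using assms(1) by (intro sum.atLeast_Suc_atMost) simp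
  ultimately show ?thesis using first by linarith
qed

end
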